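(* Let $G\in M_n(R)$ be the matrix with $G_{i,i+n-2}=1$ for $i=1,2$, $G_{i,i-2}=x^2$ for $3\le i\le n$, and all other entries $0$, and let $\alpha$ be the automorphism $\alpha(\lambda)=G^{-1}\lambda G$ of $\Lambda$. Identify $\mathrm D_R\Lambda=\operatorname{Hom}_R(\Lambda,R)$ with $\{Y\in M_n(K(x)):\operatorname{tr}(Y\lambda)\in R\ \forall\lambda\in\Lambda\}$ via the trace pairing, so that the $\Lambda$-bimodule structure becomes matrix multiplication on both sides. Then $f:\Lambda\to\mathrm D_R\Lambda$, $\mu\mapsto\mu G^{-1}$, is an isomorphism of $\Lambda$-bimodules ${}_1\Lambda_\alpha\cong\mathrm D_R\Lambda$.
   Context: $K$ a field, $R=K[x]$, $n\ge3$. $\Lambda\subset M_n(K(x))$ is the $R$-order with $(i,j)$ entry $x^{c_{ij}}R$, $c_{ij}=0$ for $i\le j$ except $c_{1n}=-1$, $c_{ij}=1$ for $i=j+1$, $c_{ij}=2$ for $i\ge j+2$. For an algebra automorphism $\varsigma$ of $\Lambda$, ${}_1\Lambda_\varsigma$ denotes $\Lambda$ as a vector space with bimodule structure $a\cdot m\cdot b=am\varsigma(b)$. The bimodule $\operatorname{Hom}_R(\Lambda,R)$ has structure $(\lambda f\mu)(m)=f(\mu m\lambda)$. *)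

theory Defs
  imports "Jordan_Normal_Form.Matrix" "HOL-Computational_Algebra.Polynomial"
    "HOL-Computational_Algebra.Fraction_Field"
begin

(* R = K[x] is 'k poly, K(x) = 'k poly fract. Matrix indices are 0-based:
   paper index i corresponds to Isabelle index i-1. *)

definition embR :: "'k::field poly \<Rightarrow> 'k poly fract" where
  "embR r = Fract r 1"

definition Xf :: "'k::field poly fract" where
  "Xf = embR [:0, 1:]"

definition mat_trace :: "'a::comm_ring_1 mat \<Rightarrow> 'a" where
  "mat_trace A = (\<Sum>i<dim_row A. A $$ (i, i))"

definition cexp :: "nat \<Rightarrow> nat \<Rightarrow> nat \<Rightarrow> int" where
  "cexp n i j = (if i = 0 \<and> j = n - 1 then -1
                 else if i \<le> j then 0
                 else if i = j + 1 then 1 else 2)"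

definition Lam :: "nat \<Rightarrow> 'k::field poly fract mat set" where
  "Lam n = {M \<in> carrier_mat n n. \<forall>i<n. \<forall>j<n.
              \<exists>r. M $$ (i, j) = Xf powi (cexp n i j) * embR r}"

definition DLam :: "nat \<Rightarrow> 'k::field poly fract mat set" where
  "DLam n = {Y \<in> carrier_mat n n. \<forall>l\<in>Lam n. mat_trace (Y * l) \<in> range embR}"

definition Gmat :: "nat \<Rightarrow> 'k::field poly fract mat" where
  "Gmat n = mat n n (\<lambda>(i, j).
     if i < 2 \<and> j = i + n - 2 then 1
     else if 2 \<le> i \<and> j = i - 2 then Xf ^ 2 else 0)"

definition Ginv :: "nat \<Rightarrow> 'k::field poly fract mat" where
  "Ginv n = (THE H. H \<in> carrier_mat n n \<and> Gmat n * H = 1\<^sub>m n \<and> H * Gmat n = 1\<^sub>m n)"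

definition alpha :: "nat \<Rightarrow> 'k::field poly fract mat \<Rightarrow> 'k poly fract mat" where
  "alpha n l = Ginv n * l * Gmat n"

definition fmap :: "nat \<Rightarrow> 'k::field poly fract mat \<Rightarrow> 'k poly fract mat" where
  "fmap n m = m * Ginv n"

end

theory Submission
  imports Defs
begin

text \<open>
  G is a monomial matrix: its only nonzero entry in column j is x^(e j) in row \<sigma> j, where
  \<sigma> is the cyclic shift j \<mapsto> j + 2 (mod n) and e j = 2 for j < n - 2, e j = 0 otherwise.
  Conjugation by G and right multiplication by G\<inverse> therefore only permute the entries of a
  matrix and multiply them by powers of x. Since \<Lambda> consists of the matrices with (i, j) entry
  in x^(c i j) R, and its trace dual of those with (i, j) entry in x^(- c j i) R, both
  membership statements reduce to the exponent identities
  c (\<sigma> i) (\<sigma> j) = c i j + e i - e j  and  c i j + c (\<sigma> j) i = e j.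
  The remaining bimodule identities are associativity.
\<close>

lemma embR_add: "embR (a + b) = embR a + embR b"
  by (simp add: embR_def)

lemma embR_mult: "embR (a * b) = embR a * embR b"
  by (simp add: embR_def)

lemma Xf_nonzero: "Xf \<noteq> (0::'k::field poly fract)"
  by (simp add: Xf_def embR_def Zero_fract_def eq_fract)

definition xpowR :: "int \<Rightarrow> 'k::field poly fract set" where
  "xpowR c = range (\<lambda>r. Xf powi c * embR r)"

lemma xpowR_0: "xpowR 0 = range embR"
  by (simp add: xpowR_def)

lemma zero_in_xpowR: "0 \<in> xpowR c"
  unfolding xpowR_def by (rule range_eqI[of _ _ 0]) (simp add: embR_def Zero_fract_def)

lemma xpow_in_xpowR: "Xf powi c \<in> xpowR c"
  unfolding xpowR_def by (rule range_eqI[of _ _ 1]) (simp add: embR_def One_fract_def)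

lemma add_in_xpowR: "a \<in> xpowR c \<Longrightarrow> b \<in> xpowR c \<Longrightarrow> a + b \<in> xpowR c"
  unfolding xpowR_def by (auto simp flip: distrib_left embR_add)

lemma sum_in_xpowR: "(\<And>x. x \<in> A \<Longrightarrow> f x \<in> xpowR c) \<Longrightarrow> sum f A \<in> xpowR c"
  by (induction A rule: infinite_finite_induct) (auto intro: zero_in_xpowR add_in_xpowR)

lemma mult_in_xpowR: "a \<in> xpowR c \<Longrightarrow> b \<in> xpowR d \<Longrightarrow> a * b \<in> xpowR (c + d)"
  unfolding xpowR_def
proof (elim rangeE)
  fix r s assume "a = Xf powi c * embR r" "b = Xf powi d * embR s"
  then have "a * b = Xf powi (c + d) * embR (r * s)"
    by (simp add: power_int_add Xf_nonzero embR_mult algebra_simps)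
  then show "a * b \<in> range (\<lambda>r. Xf powi (c + d) * embR r)" by blast
qed

lemma xpow_mult_in_xpowR_iff: "Xf powi k * z \<in> xpowR c \<longleftrightarrow> z \<in> xpowR (c - k)"
proof
  assume "Xf powi k * z \<in> xpowR c"
  from mult_in_xpowR[OF xpow_in_xpowR this, of "-k"] show "z \<in> xpowR (c - k)"
    by (simp add: mult.assoc[symmetric] power_int_add[symmetric] Xf_nonzero)
next
  assume "z \<in> xpowR (c - k)"
  from mult_in_xpowR[OF xpow_in_xpowR this, of k] show "Xf powi k * z \<in> xpowR c"
    by simp
qed

definition xlattice :: "nat \<Rightarrow> (nat \<Rightarrow> nat \<Rightarrow> int) \<Rightarrow> 'k::field poly fract mat set" where
  "xlattice n c = {M \<in> carrier_mat n n. \<forall>i<n. \<forall>j<n. M $$ (i, j) \<in> xpowR (c i j)}"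

lemma Lam_eq_xlattice: "Lam n = xlattice n (cexp n)"
  by (simp add: Lam_def xlattice_def xpowR_def image_iff)

lemma mat_trace_mult:
  assumes "A \<in> carrier_mat n m" "B \<in> carrier_mat m n"
  shows "mat_trace (A * B) = (\<Sum>i<n. \<Sum>k<m. A $$ (i, k) * B $$ (k, i))"
  using assms by (auto simp: mat_trace_def scalar_prod_def atLeast0LessThan intro!: sum.cong)

lemma mat_trace_mult_single_entry:
  assumes "A \<in> carrier_mat n n" "i < n" "j < n"
  shows "mat_trace (A * mat n n (\<lambda>(p, q). if p = j \<and> q = i then a else 0)) = A $$ (i, j) * a"
proof -
  have row: "(\<Sum>k<n. A $$ (p, k) * (if k = j \<and> p = i then a else 0))
      = (if p = i then A $$ (i, j) * a else 0)" for p
    using assms by (cases "p = i") (simp_all add: if_distrib[of "(*) _"] cong: if_cong)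
  have "mat_trace (A * mat n n (\<lambda>(p, q). if p = j \<and> q = i then a else 0))
      = (\<Sum>p<n. \<Sum>k<n. A $$ (p, k) * (if k = j \<and> p = i then a else 0))"
    using assms by (auto simp: mat_trace_mult intro!: sum.cong)
  also have "\<dots> = A $$ (i, j) * a"
    using assms by (simp add: row)
  finally show ?thesis .
qed

lemma dual_xlattice:
  "{Y \<in> carrier_mat n n. \<forall>l\<in>(xlattice n c :: 'k::field poly fract mat set). mat_trace (Y * l) \<in> range embR}
     = xlattice n (\<lambda>i j. - c j i)"
proof (intro equalityI subsetI)
  fix Y :: "'k poly fract mat"
  assume "Y \<in> {Y \<in> carrier_mat n n. \<forall>l\<in>xlattice n c. mat_trace (Y * l) \<in> range embR}"
  then have Y: "Y \<in> carrier_mat n n" and dual: "\<And>l. l \<in> xlattice n c \<Longrightarrow> mat_trace (Y * l) \<in> xpowR 0"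
    by (auto simp: xpowR_0)
  show "Y \<in> xlattice n (\<lambda>i j. - c j i)"
    unfolding xlattice_def
  proof (intro CollectI conjI Y allI impI)
    fix i j assume ij: "i < n" "j < n"
    let ?E = "mat n n (\<lambda>(p, q). if p = j \<and> q = i then Xf powi (c j i) else 0)"
    have "?E \<in> xlattice n c"
      by (auto simp: xlattice_def xpow_in_xpowR zero_in_xpowR)
    from dual[OF this] show "Y $$ (i, j) \<in> xpowR (- c j i)"
      by (simp add: mat_trace_mult_single_entry[OF Y ij] mult.commute xpow_mult_in_xpowR_iff)
  qed
next
  fix Y :: "'k poly fract mat"
  assume Y: "Y \<in> xlattice n (\<lambda>i j. - c j i)"
  have "mat_trace (Y * l) \<in> xpowR 0" if l: "l \<in> xlattice n c" for l
  proof -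
    have "Y $$ (i, k) * l $$ (k, i) \<in> xpowR 0" if "i < n" "k < n" for i k
      using mult_in_xpowR[of "Y $$ (i, k)" "- c k i" "l $$ (k, i)" "c k i"] Y l that
      by (simp add: xlattice_def)
    then show ?thesis
      using Y l by (auto simp: xlattice_def mat_trace_mult intro!: sum_in_xpowR)
  qed
  then show "Y \<in> {Y \<in> carrier_mat n n. \<forall>l\<in>xlattice n c. mat_trace (Y * l) \<in> range embR}"
    using Y by (simp add: xlattice_def xpowR_0)
qed

lemma DLam_eq_xlattice: "DLam n = xlattice n (\<lambda>i j. - cexp n j i)"
  unfolding DLam_def Lam_eq_xlattice by (rule dual_xlattice)

locale inverse_mat_pair =
  fixes n :: nat and M N :: "'a::semiring_1 mat"
  assumes M_carrier: "M \<in> carrier_mat n n" and N_carrier: "N \<in> carrier_mat n n"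
    and mult_inverse: "M * N = 1\<^sub>m n" and inverse_mult: "N * M = 1\<^sub>m n"
begin

(* Instances of mult_carrier_mat and assoc_mult_mat with the dimension fixed, so that the
   simplifier can discharge their carrier premises. *)

lemma mult_closed: "A \<in> carrier_mat n n \<Longrightarrow> B \<in> carrier_mat n n \<Longrightarrow> A * B \<in> carrier_mat n n"
  by simp

lemma assoc: "A \<in> carrier_mat n n \<Longrightarrow> B \<in> carrier_mat n n \<Longrightarrow> C \<in> carrier_mat n n \<Longrightarrow>
    A * B * C = A * (B * C)"
  by simp

lemma mult_one:
  fixes A :: "'a mat"
  assumes "A \<in> carrier_mat n n"
  shows "1\<^sub>m n * A = A" "A * 1\<^sub>m n = A"
  by (rule left_mult_one_mat[OF assms], rule right_mult_one_mat[OF assms])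

lemma cancel:
  assumes "A \<in> carrier_mat n n"
  shows "M * (N * A) = A" "N * (M * A) = A"
  by (simp_all add: assms M_carrier N_carrier mult_inverse inverse_mult mult_one flip: assoc)

lemmas mat_simps = M_carrier N_carrier mult_inverse inverse_mult mult_closed assoc mult_one cancel

lemma the_inverse: "(THE H. H \<in> carrier_mat n n \<and> M * H = 1\<^sub>m n \<and> H * M = 1\<^sub>m n) = N"
proof (rule the_equality)
  fix H assume "H \<in> carrier_mat n n \<and> M * H = 1\<^sub>m n \<and> H * M = 1\<^sub>m n"
  then have H: "H \<in> carrier_mat n n" "H * M = 1\<^sub>m n" by auto
  have "N = (H * M) * N"
    using H N_carrier by (simp add: mult_one)
  also have "\<dots> = H"
    using H(1) by (simp add: assoc[OF H(1) M_carrier N_carrier] mult_inverse mult_one)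
  finally show "H = N" by simp
qed (simp add: N_carrier mult_inverse inverse_mult)

lemma bij_betw_conj:
  assumes "S \<subseteq> carrier_mat n n" "\<And>l. l \<in> carrier_mat n n \<Longrightarrow> N * l * M \<in> S \<longleftrightarrow> l \<in> S"
  shows "bij_betw (\<lambda>l. N * l * M) S S"
proof (rule bij_betw_byWitness[where f' = "\<lambda>l. M * l * N"])
  have carrier: "l \<in> carrier_mat n n" if "l \<in> S" for l
    using that assms(1) by blast
  show inv: "\<forall>l\<in>S. M * (N * l * M) * N = l" "\<forall>l\<in>S. N * (M * l * N) * M = l"
    by (auto simp: carrier mat_simps)
  show "(\<lambda>l. N * l * M) ` S \<subseteq> S"
    by (auto simp: carrier assms(2))
  show "(\<lambda>l. M * l * N) ` S \<subseteq> S"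
  proof (rule image_subsetI)
    fix l assume "l \<in> S"
    with inv(2) assms(2)[of "M * l * N"] show "M * l * N \<in> S"
      by (simp add: carrier mat_simps)
  qed
qed

lemma bij_betw_mult_right:
  assumes "L \<subseteq> carrier_mat n n" "D \<subseteq> carrier_mat n n"
    and "\<And>m. m \<in> carrier_mat n n \<Longrightarrow> m * N \<in> D \<longleftrightarrow> m \<in> L"
  shows "bij_betw (\<lambda>m. m * N) L D"
proof (rule bij_betw_byWitness[where f' = "\<lambda>Y. Y * M"])
  have carrier_L: "m \<in> carrier_mat n n" if "m \<in> L" for m
    using that assms(1) by blast
  have carrier_D: "Y \<in> carrier_mat n n" if "Y \<in> D" for Y
    using that assms(2) by blast
  show inv: "\<forall>m\<in>L. m * N * M = m" "\<forall>Y\<in>D. Y * M * N = Y"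
    by (auto simp: carrier_L carrier_D mat_simps)
  show "(\<lambda>m. m * N) ` L \<subseteq> D"
    by (auto simp: carrier_L assms(3))
  show "(\<lambda>Y. Y * M) ` D \<subseteq> L"
  proof (rule image_subsetI)
    fix Y assume "Y \<in> D"
    with inv(2) assms(3)[of "Y * M"] show "Y * M \<in> L"
      by (simp add: carrier_D mat_simps)
  qed
qed

lemma conj_mult:
  "A \<in> carrier_mat n n \<Longrightarrow> B \<in> carrier_mat n n \<Longrightarrow> N * (A * B) * M = (N * A * M) * (N * B * M)"
  by (simp add: mat_simps)

lemma conj_add:
  assumes "A \<in> carrier_mat n n" "B \<in> carrier_mat n n"
  shows "N * (A + B) * M = N * A * M + N * B * M"
  using assms M_carrier N_carrier
  by (simp add: mult_add_distrib_mat[of N n n A n B] add_mult_distrib_mat[of "N * A" n n "N * B" M n])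

lemma mult_right_conj:
  "A \<in> carrier_mat n n \<Longrightarrow> B \<in> carrier_mat n n \<Longrightarrow> C \<in> carrier_mat n n \<Longrightarrow>
    A * B * (N * C * M) * N = A * (B * N) * C"
  by (simp add: mat_simps)

end

definition monomial_mat :: "nat \<Rightarrow> (nat \<Rightarrow> nat) \<Rightarrow> (nat \<Rightarrow> 'a::zero) \<Rightarrow> 'a mat" where
  "monomial_mat n \<sigma> w = mat n n (\<lambda>(i, j). if i = \<sigma> j then w j else 0)"

lemma monomial_mat_carrier [simp]: "monomial_mat n \<sigma> w \<in> carrier_mat n n"
  and dim_monomial_mat [simp]: "dim_row (monomial_mat n \<sigma> w) = n" "dim_col (monomial_mat n \<sigma> w) = n"
  by (simp_all add: monomial_mat_def)

lemma index_mult_monomial_mat_right: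
  fixes A :: "'a::semiring_0 mat"
  assumes "A \<in> carrier_mat m n" "i < m" "j < n" "\<sigma> j < n"
  shows "(A * monomial_mat n \<sigma> w) $$ (i, j) = A $$ (i, \<sigma> j) * w j"
proof -
  have "(A * monomial_mat n \<sigma> w) $$ (i, j) = (\<Sum>k<n. A $$ (i, k) * (if k = \<sigma> j then w j else 0))"
    using assms by (auto simp: scalar_prod_def monomial_mat_def atLeast0LessThan intro!: sum.cong)
  also have "\<dots> = A $$ (i, \<sigma> j) * w j"
    using assms(4) by (simp add: if_distrib[of "(*) _"] cong: if_cong)
  finally show ?thesis .
qed

locale index_perm =
  fixes n :: nat and \<sigma> \<tau> :: "nat \<Rightarrow> nat"
  assumes perm_lt: "i < n \<Longrightarrow> \<sigma> i < n"
    and inv_lt: "i < n \<Longrightarrow> \<tau> i < n"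
    and inv_perm: "i < n \<Longrightarrow> \<tau> (\<sigma> i) = i"
    and perm_inv: "i < n \<Longrightarrow> \<sigma> (\<tau> i) = i"
begin

lemma swap: "index_perm n \<tau> \<sigma>"
  by unfold_locales (simp_all add: perm_lt inv_lt inv_perm perm_inv)

lemma all_perm_iff: "(\<forall>i<n. P (\<sigma> i)) \<longleftrightarrow> (\<forall>i<n. P i)"
  by (metis perm_lt inv_lt perm_inv)

lemma eq_perm_iff: "i < n \<Longrightarrow> k < n \<Longrightarrow> i = \<sigma> k \<longleftrightarrow> k = \<tau> i"
  by (metis inv_perm perm_inv)

lemma index_mult_monomial_mat_left:
  fixes B :: "'a::semiring_0 mat"
  assumes "B \<in> carrier_mat n m" "i < n" "j < m"
  shows "(monomial_mat n \<sigma> w * B) $$ (i, j) = w (\<tau> i) * B $$ (\<tau> i, j)"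
proof -
  have "(monomial_mat n \<sigma> w * B) $$ (i, j) = (\<Sum>k<n. (if k = \<tau> i then w k else 0) * B $$ (k, j))"
    using assms by (auto simp: scalar_prod_def monomial_mat_def atLeast0LessThan eq_perm_iff
        intro!: sum.cong)
  also have "\<dots> = w (\<tau> i) * B $$ (\<tau> i, j)"
    using assms(2) inv_lt by (simp add: if_distrib[of "\<lambda>x. x * _"] cong: if_cong)
  finally show ?thesis .
qed

lemma monomial_mat_inverse:
  fixes w :: "nat \<Rightarrow> 'a::field"
  assumes "\<And>i. i < n \<Longrightarrow> w i \<noteq> 0"
  shows "monomial_mat n \<sigma> w * monomial_mat n \<tau> (\<lambda>k. inverse (w (\<tau> k))) = 1\<^sub>m n"
    and "monomial_mat n \<tau> (\<lambda>k. inverse (w (\<tau> k))) * monomial_mat n \<sigma> w = 1\<^sub>m n"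
proof -
  let ?M = "monomial_mat n \<sigma> w" and ?N = "monomial_mat n \<tau> (\<lambda>k. inverse (w (\<tau> k)))"
  show "?M * ?N = 1\<^sub>m n"
  proof (rule eq_matI)
    fix i j assume "i < dim_row (1\<^sub>m n :: 'a mat)" "j < dim_col (1\<^sub>m n :: 'a mat)"
    then have ij: "i < n" "j < n" by auto
    then have "(?M * ?N) $$ (i, j) = ?M $$ (i, \<tau> j) * inverse (w (\<tau> j))"
      using inv_lt by (intro index_mult_monomial_mat_right) auto
    then show "(?M * ?N) $$ (i, j) = 1\<^sub>m n $$ (i, j)"
      using ij inv_lt assms by (auto simp: monomial_mat_def perm_inv eq_perm_iff)
  qed auto
  show "?N * ?M = 1\<^sub>m n"
  proof (rule eq_matI)
    fix i j assume "i < dim_row (1\<^sub>m n :: 'a mat)" "j < dim_col (1\<^sub>m n :: 'a mat)"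
    then have ij: "i < n" "j < n" by auto
    then have "(?N * ?M) $$ (i, j) = ?N $$ (i, \<sigma> j) * w j"
      using perm_lt by (intro index_mult_monomial_mat_right) auto
    then show "(?N * ?M) $$ (i, j) = 1\<^sub>m n $$ (i, j)"
      using ij perm_lt assms by (auto simp: monomial_mat_def inv_perm eq_perm_iff)
  qed auto
qed

lemma inverse_mat_pair_monomial_mat:
  fixes w :: "nat \<Rightarrow> 'a::field"
  assumes "\<And>i. i < n \<Longrightarrow> w i \<noteq> 0"
  shows "inverse_mat_pair n (monomial_mat n \<sigma> w) (monomial_mat n \<tau> (\<lambda>k. inverse (w (\<tau> k))))"
  using monomial_mat_inverse[OF assms] by unfold_locales simp_all

lemma index_conj_monomial_mat:
  fixes w :: "nat \<Rightarrow> 'a::field"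
  assumes "l \<in> carrier_mat n n" "i < n" "j < n"
  shows "(monomial_mat n \<tau> (\<lambda>k. inverse (w (\<tau> k))) * l * monomial_mat n \<sigma> w) $$ (i, j)
    = inverse (w i) * l $$ (\<sigma> i, \<sigma> j) * w j"
proof -
  let ?N = "monomial_mat n \<tau> (\<lambda>k. inverse (w (\<tau> k)))"
  have "(?N * l * monomial_mat n \<sigma> w) $$ (i, j) = (?N * l) $$ (i, \<sigma> j) * w j"
    using assms perm_lt by (intro index_mult_monomial_mat_right) auto
  also have "(?N * l) $$ (i, \<sigma> j) = inverse (w (\<tau> (\<sigma> i))) * l $$ (\<sigma> i, \<sigma> j)"
    using assms perm_lt by (intro index_perm.index_mult_monomial_mat_left[OF swap]) auto
  finally show ?thesis
    using assms by (simp add: inv_perm)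
qed

lemma conj_monomial_mat_mem_xlattice_iff:
  assumes "l \<in> carrier_mat n n"
    and "\<And>i j. i < n \<Longrightarrow> j < n \<Longrightarrow> c (\<sigma> i) (\<sigma> j) = c i j + e i - e j"
  shows "monomial_mat n \<tau> (\<lambda>k. inverse (Xf powi e (\<tau> k))) * l * monomial_mat n \<sigma> (\<lambda>j. Xf powi e j)
      \<in> xlattice n c \<longleftrightarrow> l \<in> xlattice n c"
    (is "?A \<in> _ \<longleftrightarrow> _")
proof -
  have entry: "?A $$ (i, j) = Xf powi (e j - e i) * l $$ (\<sigma> i, \<sigma> j)" if "i < n" "j < n" for i j
    using index_conj_monomial_mat[OF assms(1) that, of "\<lambda>j. Xf powi e j"]
    by (simp add: power_int_diff Xf_nonzero field_simps)
  have carrier: "?A \<in> carrier_mat n n"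
    using assms(1) by (intro mult_carrier_mat) auto
  have exp: "c i j - (e j - e i) = c (\<sigma> i) (\<sigma> j)" if "i < n" "j < n" for i j
    using assms(2)[OF that] by simp
  have "?A \<in> xlattice n c \<longleftrightarrow> (\<forall>i<n. \<forall>j<n. l $$ (\<sigma> i, \<sigma> j) \<in> xpowR (c (\<sigma> i) (\<sigma> j)))"
    using assms(1) by (simp add: xlattice_def entry xpow_mult_in_xpowR_iff exp carrier
        del: index_mult_mat(1))
  also have "\<dots> \<longleftrightarrow> (\<forall>i<n. \<forall>j<n. l $$ (\<sigma> i, j) \<in> xpowR (c (\<sigma> i) j))"
    by (intro all_cong1 imp_cong refl all_perm_iff)
  also have "\<dots> \<longleftrightarrow> l \<in> xlattice n c"
    using assms(1) all_perm_iff[of "\<lambda>i. \<forall>j<n. l $$ (i, j) \<in> xpowR (c i j)"] by (simp add: xlattice_def)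
  finally show ?thesis .
qed

lemma mult_monomial_mat_inverse_mem_dual_iff:
  assumes "m \<in> carrier_mat n n"
    and "\<And>i j. i < n \<Longrightarrow> j < n \<Longrightarrow> c i j + c (\<sigma> j) i = e j"
  shows "m * monomial_mat n \<tau> (\<lambda>k. inverse (Xf powi e (\<tau> k))) \<in> xlattice n (\<lambda>i j. - c j i)
      \<longleftrightarrow> m \<in> xlattice n c"
    (is "?A \<in> _ \<longleftrightarrow> _")
proof -
  have entry: "?A $$ (i, j) = Xf powi (- e (\<tau> j)) * m $$ (i, \<tau> j)" if "i < n" "j < n" for i j
    using that assms(1) inv_lt
    by (simp add: index_mult_monomial_mat_right power_int_minus mult.commute del: index_mult_mat(1))
  have "?A \<in> xlattice n (\<lambda>i j. - c j i) \<longleftrightarrow> (\<forall>i<n. \<forall>j<n. m $$ (i, \<tau> j) \<in> xpowR (c i (\<tau> j)))"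
  proof -
    have "e (\<tau> j) - c j i = c i (\<tau> j)" if "i < n" "j < n" for i j
      using assms(2)[OF that(1) inv_lt[OF that(2)]] perm_inv[OF that(2)] by simp
    then show ?thesis
      using assms(1) by (simp add: xlattice_def entry xpow_mult_in_xpowR_iff del: index_mult_mat(1))
  qed
  also have "\<dots> \<longleftrightarrow> (\<forall>i<n. \<forall>j<n. m $$ (i, j) \<in> xpowR (c i j))"
    by (intro all_cong1 imp_cong refl index_perm.all_perm_iff[OF swap])
  also have "\<dots> \<longleftrightarrow> m \<in> xlattice n c"
    using assms(1) by (simp add: xlattice_def)
  finally show ?thesis .
qed

end

definition Gshift :: "nat \<Rightarrow> nat \<Rightarrow> nat" where
  "Gshift n j = (if j + 2 < n then j + 2 else j + 2 - n)"

definition Gshift_inv :: "nat \<Rightarrow> nat \<Rightarrow> nat" where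
  "Gshift_inv n i = (if i < 2 then i + n - 2 else i - 2)"

definition Gexp :: "nat \<Rightarrow> nat \<Rightarrow> int" where
  "Gexp n j = (if j + 2 < n then 2 else 0)"

lemma index_perm_Gshift: "2 \<le> n \<Longrightarrow> index_perm n (Gshift n) (Gshift_inv n)"
  by unfold_locales (auto simp: Gshift_def Gshift_inv_def)

lemma Gshift_cases:
  assumes "3 \<le> n" "j < n"
  obtains "j + 2 < n" "Gshift n j = j + 2" "Gexp n j = 2"
    | "j = n - 2" "Gshift n j = 0" "Gexp n j = 0"
    | "j = n - 1" "Gshift n j = 1" "Gexp n j = 0"
proof -
  consider "j + 2 < n" | "j = n - 2" | "j = n - 1"
    using assms by linarith
  then show ?thesis
    using assms that by cases (auto simp: Gshift_def Gexp_def)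
qed

lemma Gmat_eq_monomial_mat:
  assumes "3 \<le> n"
  shows "Gmat n = monomial_mat n (Gshift n) (\<lambda>j. Xf powi Gexp n j)"
proof (rule eq_matI)
  fix i j assume "i < dim_row (monomial_mat n (Gshift n) (\<lambda>j. Xf powi Gexp n j))"
    "j < dim_col (monomial_mat n (Gshift n) (\<lambda>j. Xf powi Gexp n j))"
  then have ij: "i < n" "j < n" by auto
  from assms ij(2) show "Gmat n $$ (i, j) = monomial_mat n (Gshift n) (\<lambda>j. Xf powi Gexp n j) $$ (i, j)"
    by (cases rule: Gshift_cases) (use assms ij in \<open>auto simp: Gmat_def monomial_mat_def\<close>)
qed (simp_all add: Gmat_def)

lemma cexp_Gshift:
  assumes "3 \<le> n" "i < n" "j < n"
  shows "cexp n (Gshift n i) (Gshift n j) = cexp n i j + Gexp n i - Gexp n j"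
  by (cases rule: Gshift_cases[OF assms(1,2)]; cases rule: Gshift_cases[OF assms(1,3)])
    (use assms in \<open>auto simp: cexp_def\<close>)

lemma cexp_add_cexp_Gshift:
  assumes "3 \<le> n" "i < n" "j < n"
  shows "cexp n i j + cexp n (Gshift n j) i = Gexp n j"
  by (cases rule: Gshift_cases[OF assms(1,3)]) (use assms in \<open>auto simp: cexp_def\<close>)

theorem proposition3p20:
  fixes n :: nat
  assumes "n \<ge> 3"
  defines "L \<equiv> (Lam n :: 'k::field poly fract mat set)"
  shows "Gmat n * Ginv n = (1\<^sub>m n :: 'k poly fract mat) \<and> Ginv n * Gmat n = (1\<^sub>m n :: 'k poly fract mat)
     \<and> bij_betw (alpha n) L L
     \<and> (\<forall>a\<in>L. \<forall>b\<in>L. alpha n (a * b) = alpha n a * alpha n b)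
     \<and> (\<forall>a\<in>L. \<forall>b\<in>L. alpha n (a + b) = alpha n a + alpha n b)
     \<and> bij_betw (fmap n) L (DLam n)
     \<and> (\<forall>m\<in>L. \<forall>m'\<in>L. fmap n (m + m') = fmap n m + fmap n m')
     \<and> (\<forall>r. \<forall>m\<in>L. fmap n (embR r \<cdot>\<^sub>m m) = embR r \<cdot>\<^sub>m fmap n m)
     \<and> (\<forall>a\<in>L. \<forall>m\<in>L. \<forall>b\<in>L. fmap n (a * m * alpha n b) = a * fmap n m * b)"
proof -
  have n: "3 \<le> n" using assms by simp
  interpret perm: index_perm n "Gshift n" "Gshift_inv n"
    using n by (simp add: index_perm_Gshift)
  define N :: "'k poly fract mat" where
    "N = monomial_mat n (Gshift_inv n) (\<lambda>k. inverse (Xf powi Gexp n (Gshift_inv n k)))"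
  interpret G: inverse_mat_pair n "Gmat n" N
    unfolding N_def Gmat_eq_monomial_mat[OF n]
    by (rule perm.inverse_mat_pair_monomial_mat) (simp add: Xf_nonzero)
  have Ginv: "Ginv n = N"
    unfolding Ginv_def by (rule G.the_inverse)
  have L: "L = xlattice n (cexp n)" "L \<subseteq> carrier_mat n n"
    by (auto simp: L_def Lam_eq_xlattice xlattice_def)
  have D: "DLam n = xlattice n (\<lambda>i j. - cexp n j i)" "DLam n \<subseteq> carrier_mat n n"
    by (auto simp: DLam_eq_xlattice xlattice_def)
  have alpha_mem_iff: "N * l * Gmat n \<in> L \<longleftrightarrow> l \<in> L" if "l \<in> carrier_mat n n" for l
    unfolding L N_def Gmat_eq_monomial_mat[OF n]
    by (rule perm.conj_monomial_mat_mem_xlattice_iff[OF that]) (simp add: n cexp_Gshift)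
  have fmap_mem_iff: "m * N \<in> DLam n \<longleftrightarrow> m \<in> L" if "m \<in> carrier_mat n n" for m
    unfolding L D N_def
    by (rule perm.mult_monomial_mat_inverse_mem_dual_iff[OF that]) (simp add: n cexp_add_cexp_Gshift)
  have alpha: "alpha n = (\<lambda>l. N * l * Gmat n)" and fmap: "fmap n = (\<lambda>m. m * N)"
    by (simp_all add: alpha_def fmap_def Ginv fun_eq_iff)
  have carrier: "a \<in> carrier_mat n n" if "a \<in> L" for a
    using that L(2) by blast
  show ?thesis
    unfolding Ginv alpha fmap
    by (auto simp: carrier G.mult_inverse G.inverse_mult G.conj_mult G.conj_add G.mult_right_conj
        add_mult_distrib_mat[OF carrier carrier G.N_carrier] mult_smult_assoc_mat[OF carrier G.N_carrier]
        intro: G.bij_betw_conj[OF L(2) alpha_mem_iff] G.bij_betw_mult_right[OF L(2) D(2) fmap_mem_iff])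
qed

end
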